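(* For each $\lambda\in\mathbb N$ and $n\in\mathbb N$ there exists a nonzero $p_{0,\lambda}\in\mathcal S((\mathbb T,\mathbb R)_x)$ such that each $p_{0,\lambda}^{(-j;\lambda)}$, $1\le j\le n$, is well-defined and belongs to $\mathcal S((\mathbb T,\mathbb R)_x)$, and $$\|(p_{0,\lambda},p_{0,\lambda}^{(-1;\lambda)},\dots,p_{0,\lambda}^{(-n;\lambda)})\|_{H^m_x}\lesssim_{m,n}\|p_{0,\lambda}\|_{L^2}\quad\text{for every }m\in\mathbb N_0,$$ with implicit constant independent of $\lambda$, and with one of the following properties: either $p_{0,\lambda},\dots,p^{(-n;\lambda)}_{0,\lambda}$ are all supported in $(-1,1)$; or their Fourier transforms $\mathcal F[p_{0,\lambda}],\dots,\mathcal F[p^{(-n;\lambda)}_{0,\lambda}]$ are all supported in $(-1,1)$.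
   Context: Here $(\mathbb T,\mathbb R)_x$ denotes either $\mathbb T_x=\mathbb R/2\pi\mathbb Z$ or $\mathbb R_x$. Define the right inverse $\partial_x^{-1}$ of $\partial_x$ by $\partial_x^{-1}g(x)=\int_0^xg(x')dx'+\int_0^{2\pi}x'g(x')dx'$ on $\mathbb T_x$ (defined when $\int g\,dx=0$) and $\partial_x^{-1}g(x)=\int_{-\infty}^xg(x')dx'$ on $\mathbb R_x$. For a function $g$ for which these are defined, set $g^{(-1;\lambda)}=i\lambda e^{-i\lambda x}\partial_x^{-1}(e^{i\lambda x}g)$ and inductively $g^{(-j-1;\lambda)}=i\lambda e^{-i\lambda x}\partial_x^{-1}(e^{i\lambda x}g^{(-j;\lambda)})$. *)

theory Defs
  imports "HOL-Analysis.Analysis"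
begin

definition vderiv :: "nat \<Rightarrow> (real \<Rightarrow> complex) \<Rightarrow> real \<Rightarrow> complex" where
  "vderiv k f = ((\<lambda>g x. vector_derivative g (at x)) ^^ k) f"

definition smooth_fun :: "(real \<Rightarrow> complex) \<Rightarrow> bool" where
  "smooth_fun f \<longleftrightarrow> (\<forall>k x. (vderiv k f has_vector_derivative vderiv (Suc k) f x) (at x))"

definition schwartz_R :: "(real \<Rightarrow> complex) \<Rightarrow> bool" where
  "schwartz_R f \<longleftrightarrow> smooth_fun f \<and>
     (\<forall>a k. bounded (range (\<lambda>x. complex_of_real (x ^ a) * vderiv k f x)))"

definition periodic_2pi :: "(real \<Rightarrow> complex) \<Rightarrow> bool" where
  "periodic_2pi f \<longleftrightarrow> (\<forall>x. f (x + 2 * pi) = f x)"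

definition schwartz_T :: "(real \<Rightarrow> complex) \<Rightarrow> bool" where
  "schwartz_T f \<longleftrightarrow> periodic_2pi f \<and> smooth_fun f"

definition L2_R :: "(real \<Rightarrow> complex) \<Rightarrow> real" where
  "L2_R f = sqrt (integral UNIV (\<lambda>x. (cmod (f x))\<^sup>2))"

definition L2_T :: "(real \<Rightarrow> complex) \<Rightarrow> real" where
  "L2_T f = sqrt (integral {0..2*pi} (\<lambda>x. (cmod (f x))\<^sup>2))"

text \<open>Sobolev H^m norms (derivative form, equivalent to the Fourier form up to constants depending on m).\<close>
definition Hm_R :: "nat \<Rightarrow> (real \<Rightarrow> complex) \<Rightarrow> real" where
  "Hm_R m f = sqrt (\<Sum>k\<le>m. integral UNIV (\<lambda>x. (cmod (vderiv k f x))\<^sup>2))"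

definition Hm_T :: "nat \<Rightarrow> (real \<Rightarrow> complex) \<Rightarrow> real" where
  "Hm_T m f = sqrt (\<Sum>k\<le>m. integral {0..2*pi} (\<lambda>x. (cmod (vderiv k f x))\<^sup>2))"

definition fourier_R :: "(real \<Rightarrow> complex) \<Rightarrow> real \<Rightarrow> complex" where
  "fourier_R f \<xi> = integral UNIV (\<lambda>x. exp (- \<i> * complex_of_real (x * \<xi>)) * f x)"

definition fourier_T :: "(real \<Rightarrow> complex) \<Rightarrow> int \<Rightarrow> complex" where
  "fourier_T f k = integral {0..2*pi} (\<lambda>x. exp (- \<i> * complex_of_real (real_of_int k * x)) * f x)
                    / complex_of_real (2 * pi)"

definition int0 :: "(real \<Rightarrow> complex) \<Rightarrow> real \<Rightarrow> complex" where
  "int0 g x = (if 0 \<le> x then integral {0..x} g else - integral {x..0} g)"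

definition inv_dx_T :: "(real \<Rightarrow> complex) \<Rightarrow> real \<Rightarrow> complex" where
  "inv_dx_T g x = int0 g x + integral {0..2*pi} (\<lambda>x'. complex_of_real x' * g x')"

definition inv_dx_T_defined :: "(real \<Rightarrow> complex) \<Rightarrow> bool" where
  "inv_dx_T_defined g \<longleftrightarrow> g integrable_on {0..2*pi} \<and>
     (\<lambda>x'. complex_of_real x' * g x') integrable_on {0..2*pi} \<and>
     integral {0..2*pi} g = 0"

definition inv_dx_R :: "(real \<Rightarrow> complex) \<Rightarrow> real \<Rightarrow> complex" where
  "inv_dx_R g x = integral {..x} g"

definition inv_dx_R_defined :: "(real \<Rightarrow> complex) \<Rightarrow> bool" where
  "inv_dx_R_defined g \<longleftrightarrow> (\<forall>x. g integrable_on {..x})"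

definition emod :: "nat \<Rightarrow> real \<Rightarrow> complex" where
  "emod l x = exp (\<i> * complex_of_real (real l * x))"

text \<open>g^(-1;lambda) = i lambda e^{-i lambda x} dx^{-1}(e^{i lambda x} g)\<close>
definition step_T :: "nat \<Rightarrow> (real \<Rightarrow> complex) \<Rightarrow> real \<Rightarrow> complex" where
  "step_T l g x = \<i> * of_nat l * exp (- \<i> * complex_of_real (real l * x)) *
                   inv_dx_T (\<lambda>x'. emod l x' * g x') x"

definition step_R :: "nat \<Rightarrow> (real \<Rightarrow> complex) \<Rightarrow> real \<Rightarrow> complex" where
  "step_R l g x = \<i> * of_nat l * exp (- \<i> * complex_of_real (real l * x)) *
                   inv_dx_R (\<lambda>x'. emod l x' * g x') x"

definition iter_T :: "nat \<Rightarrow> nat \<Rightarrow> (real \<Rightarrow> complex) \<Rightarrow> real \<Rightarrow> complex" where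
  "iter_T l j g = (step_T l ^^ j) g"

definition iter_R :: "nat \<Rightarrow> nat \<Rightarrow> (real \<Rightarrow> complex) \<Rightarrow> real \<Rightarrow> complex" where
  "iter_R l j g = (step_R l ^^ j) g"

definition iter_T_defined :: "nat \<Rightarrow> nat \<Rightarrow> (real \<Rightarrow> complex) \<Rightarrow> bool" where
  "iter_T_defined l n g \<longleftrightarrow> (\<forall>j<n. inv_dx_T_defined (\<lambda>x. emod l x * iter_T l j g x))"

definition iter_R_defined :: "nat \<Rightarrow> nat \<Rightarrow> (real \<Rightarrow> complex) \<Rightarrow> bool" where
  "iter_R_defined l n g \<longleftrightarrow> (\<forall>j<n. inv_dx_R_defined (\<lambda>x. emod l x * iter_R l j g x))"

definition supp_in_R :: "(real \<Rightarrow> complex) \<Rightarrow> bool" where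
  "supp_in_R f \<longleftrightarrow> closure {x. f x \<noteq> 0} \<subseteq> {-1<..<1}"

text \<open>Support on T inside (the image of) (-1,1): for periodic f, the closed support lies in the
  periodised copies of (-1,1).\<close>
definition supp_in_T :: "(real \<Rightarrow> complex) \<Rightarrow> bool" where
  "supp_in_T f \<longleftrightarrow> closure {x. f x \<noteq> 0} \<subseteq> (\<Union>k::int. {2*pi*k - 1<..<2*pi*k + 1})"

definition fsupp_in_R :: "(real \<Rightarrow> complex) \<Rightarrow> bool" where
  "fsupp_in_R f \<longleftrightarrow> closure {\<xi>. fourier_R f \<xi> \<noteq> 0} \<subseteq> {-1<..<1}"

definition fsupp_in_T :: "(real \<Rightarrow> complex) \<Rightarrow> bool" where
  "fsupp_in_T f \<longleftrightarrow> (\<forall>k. fourier_T f k \<noteq> 0 \<longrightarrow> -1 < k \<and> k < 1)"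

end

theory Submission
  imports Defs "HOL-Computational_Algebra.Polynomial"
begin

(* Fix a smooth bump s and put p = (\<lambda>\<inverse> d/dx + i)^(n+1) s. Since
   e^(i\<lambda>x) (\<lambda>\<inverse> d/dx + i) f = \<lambda>\<inverse> d/dx (e^(i\<lambda>x) f), each step g \<mapsto> g^(-1;\<lambda>) removes one
   factor and multiplies by i, so p^(-j;\<lambda>) = i^j (\<lambda>\<inverse> d/dx + i)^(n+1-j) s. These functions live
   on the support of s, and expanding the powers writes their derivatives as combinations of
   derivatives of s with coefficients of modulus at most 1, which bounds all their H^m norms
   uniformly in \<lambda> \<ge> 1. Where s = 1 we have p = i^(n+1), which bounds the L^2 norm of p from below.
   On the torus s is periodic and vanishes near 0; then the antiderivative used by \<partial>\<^sub>x\<inverse>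
   vanishes at 0 and 2\<pi>, so the normalising moment term of \<partial>\<^sub>x\<inverse> is zero. *)

section \<open>Smooth functions of a real variable\<close>

fun Ck :: "nat \<Rightarrow> (real \<Rightarrow> real) \<Rightarrow> bool" where
  "Ck 0 f \<longleftrightarrow> continuous_on UNIV f"
| "Ck (Suc k) f \<longleftrightarrow> (\<forall>x. f differentiable (at x)) \<and> Ck k (deriv f)"

lemma differentiable_imp_DERIV_deriv:
  "f differentiable (at x) \<Longrightarrow> (f has_real_derivative deriv f x) (at x)"
  by (simp add: DERIV_deriv_iff_real_differentiable)

lemma Ck_SucD: "Ck (Suc k) f \<Longrightarrow> Ck k f"
proof (induction k arbitrary: f)
  case 0
  then show ?case
    by (auto intro!: differentiable_imp_continuous_within continuous_at_imp_continuous_on)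
qed auto

lemma Ck_const: "Ck k (\<lambda>x. c)"
  by (induction k arbitrary: c) simp_all

lemma Ck_ident: "Ck k (\<lambda>x. x)"
  by (cases k) (simp_all add: Ck_const)

lemma Ck_add: "Ck k f \<Longrightarrow> Ck k g \<Longrightarrow> Ck k (\<lambda>x. f x + g x)"
proof (induction k arbitrary: f g)
  case (Suc k)
  have "deriv (\<lambda>x. f x + g x) = (\<lambda>x. deriv f x + deriv g x)"
    using Suc.prems
    by (intro ext DERIV_imp_deriv) (auto intro!: derivative_eq_intros differentiable_imp_DERIV_deriv)
  with Suc show ?case by auto
qed (auto intro: continuous_intros)

lemma Ck_mult: "Ck k f \<Longrightarrow> Ck k g \<Longrightarrow> Ck k (\<lambda>x. f x * g x)"
proof (induction k arbitrary: f g)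
  case (Suc k)
  have "deriv (\<lambda>x. f x * g x) = (\<lambda>x. deriv f x * g x + f x * deriv g x)"
    using Suc.prems
    by (intro ext DERIV_imp_deriv) (auto intro!: derivative_eq_intros differentiable_imp_DERIV_deriv)
  with Suc Ck_SucD[of k f] Ck_SucD[of k g] show ?case by (auto intro!: Ck_add)
qed (auto intro: continuous_intros)

lemma Ck_inverse: "Ck k g \<Longrightarrow> (\<And>x. g x \<noteq> 0) \<Longrightarrow> Ck k (\<lambda>x. 1 / g x)"
proof (induction k arbitrary: g)
  case (Suc k)
  have diff: "\<forall>x. (\<lambda>x. 1 / g x) differentiable (at x)"
    using Suc.prems by (auto intro!: derivative_intros)
  have d: "deriv (\<lambda>x. 1 / g x) = (\<lambda>x. (- 1 * deriv g x) * ((1 / g x) * (1 / g x)))"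
    using Suc.prems
    by (intro ext DERIV_imp_deriv)
       (auto intro!: derivative_eq_intros differentiable_imp_DERIV_deriv simp: field_simps power2_eq_square)
  have "Ck k (\<lambda>x. 1 / g x)" "Ck k (deriv g)"
    using Suc Ck_SucD[of k g] by auto
  then have "Ck k (\<lambda>x. (- 1 * deriv g x) * ((1 / g x) * (1 / g x)))"
    by (intro Ck_mult Ck_const)
  then show ?case unfolding Ck.simps d using diff by blast
qed (auto intro!: continuous_intros)

lemma Ck_compose: "Ck k f \<Longrightarrow> Ck k g \<Longrightarrow> Ck k (\<lambda>x. f (g x))"
proof (induction k arbitrary: f g)
  case 0
  then show ?case using continuous_on_compose2[of UNIV f UNIV g] by auto
next
  case (Suc k)
  have chain: "((\<lambda>x. f (g x)) has_real_derivative deriv f (g x) * deriv g x) (at x)" for x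
    using Suc.prems by (intro DERIV_chain2[OF differentiable_imp_DERIV_deriv differentiable_imp_DERIV_deriv]) auto
  then have "deriv (\<lambda>x. f (g x)) = (\<lambda>x. deriv f (g x) * deriv g x)"
    by (intro ext DERIV_imp_deriv)
  moreover have "Ck k (\<lambda>x. deriv f (g x) * deriv g x)"
    using Suc Ck_SucD[of k g] by (auto intro!: Ck_mult)
  ultimately show ?case using chain real_differentiable_def by auto
qed

lemma Ck_sin_cos: "Ck k sin \<and> Ck k cos"
proof (induction k)
  case (Suc k)
  have d: "deriv sin = cos" "deriv cos = (\<lambda>x. - 1 * sin x)"
    by (auto intro!: ext DERIV_imp_deriv derivative_eq_intros)
  have "\<forall>x::real. sin differentiable (at x)"
    using DERIV_sin real_differentiable_def by blast
  moreover have "\<forall>x::real. cos differentiable (at x)"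
    using DERIV_cos real_differentiable_def by blast
  moreover have "Ck k (\<lambda>x. - 1 * sin x)"
    using Suc by (intro Ck_mult Ck_const) blast
  ultimately show ?case unfolding Ck.simps d using Suc by blast
qed (auto intro: continuous_intros)

lemma Ck_funpow_deriv: "Ck (m + k) f \<Longrightarrow> Ck m ((deriv ^^ k) f)"
  by (induction k arbitrary: f) (simp_all add: funpow_Suc_right del: funpow.simps)

definition flat_exp :: "real poly \<Rightarrow> real \<Rightarrow> real" where
  "flat_exp P t = (if t > 0 then poly P (1 / t) * exp (- 1 / t) else 0)"

definition flat_exp_dpoly :: "real poly \<Rightarrow> real poly" where
  "flat_exp_dpoly P = [:0, 0, 1:] * (P - pderiv P)"

lemma tendsto_mult_poly_div_exp_0: "((\<lambda>u. u * poly P u / exp u) \<longlongrightarrow> (0::real)) at_top"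
proof -
  have "(\<lambda>u. u * poly P u / exp u) = (\<lambda>u. \<Sum>i\<le>degree P. coeff P i * (u ^ Suc i / exp u))"
    by (rule ext) (simp add: poly_altdef sum_distrib_left sum_divide_distrib field_simps)
  moreover have "((\<lambda>u. \<Sum>i\<le>degree P. coeff P i * (u ^ Suc i / exp u)) \<longlongrightarrow> (\<Sum>i\<le>degree P. coeff P i * 0)) at_top"
    by (intro tendsto_sum tendsto_mult tendsto_const tendsto_power_div_exp_0)
  ultimately show ?thesis by simp
qed

lemma DERIV_flat_exp_0: "(flat_exp P has_real_derivative 0) (at 0)"
proof -
  have "((\<lambda>h. inverse h * poly P (inverse h) / exp (inverse h)) \<longlongrightarrow> (0::real)) (at_right 0)"
    using filterlim_compose[OF tendsto_mult_poly_div_exp_0 filterlim_inverse_at_top_right] by simp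
  moreover have "\<forall>\<^sub>F h in at_right 0.
      inverse h * poly P (inverse h) / exp (inverse h) = (flat_exp P h - flat_exp P 0) / h"
    by (rule eventually_mono[OF eventually_at_right_less[of 0]])
       (simp add: flat_exp_def exp_minus inverse_eq_divide)
  ultimately have right: "((\<lambda>h. (flat_exp P h - flat_exp P 0) / h) \<longlongrightarrow> 0) (at_right 0)"
    by (rule Lim_transform_eventually)
  have "\<forall>\<^sub>F h in at_left 0. 0 = (flat_exp P h - flat_exp P 0) / h"
    by (auto simp: flat_exp_def intro!: eventually_mono[OF eventually_at_left_real[of "-1" 0]])
  then have left: "((\<lambda>h. (flat_exp P h - flat_exp P 0) / h) \<longlongrightarrow> 0) (at_left 0)"
    by (rule Lim_transform_eventually[OF tendsto_const])
  show ?thesis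
    unfolding has_field_derivative_iff using filterlim_split_at[OF left right] by simp
qed

lemma DERIV_flat_exp: "(flat_exp P has_real_derivative flat_exp (flat_exp_dpoly P) x) (at x)"
proof -
  consider "x > 0" | "x < 0" | "x = 0" by linarith
  then show ?thesis
  proof cases
    case 1
    have "((\<lambda>t. poly P (1 / t) * exp (- 1 / t)) has_real_derivative
        poly (pderiv P) (1 / x) * (- 1 / x\<^sup>2) * exp (- 1 / x) + poly P (1 / x) * (exp (- 1 / x) * (1 / x\<^sup>2))) (at x)"
      using 1 by (auto intro!: derivative_eq_intros simp: power2_eq_square)
    moreover have "poly (pderiv P) (1 / x) * (- 1 / x\<^sup>2) * exp (- 1 / x) + poly P (1 / x) * (exp (- 1 / x) * (1 / x\<^sup>2))
        = flat_exp (flat_exp_dpoly P) x"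
      using 1 by (simp add: flat_exp_def flat_exp_dpoly_def field_simps power2_eq_square)
    ultimately have "((\<lambda>t. poly P (1 / t) * exp (- 1 / t)) has_real_derivative flat_exp (flat_exp_dpoly P) x) (at x)"
      by simp
    then show ?thesis
      by (rule has_field_derivative_transform_within_open[where S="{0<..}"]) (use 1 in \<open>auto simp: flat_exp_def\<close>)
  next
    case 2
    have "((\<lambda>t. 0) has_real_derivative flat_exp (flat_exp_dpoly P) x) (at x)"
      using 2 by (simp add: flat_exp_def)
    then show ?thesis
      by (rule has_field_derivative_transform_within_open[where S="{..<0}"]) (use 2 in \<open>auto simp: flat_exp_def\<close>)
  next
    case 3
    then show ?thesis using DERIV_flat_exp_0 by (simp add: flat_exp_def)
  qed
qed

lemma Ck_flat_exp: "Ck k (flat_exp P)"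
proof (induction k arbitrary: P)
  case 0
  show ?case using DERIV_isCont[OF DERIV_flat_exp] by (simp add: continuous_at_imp_continuous_on)
next
  case (Suc k)
  have "deriv (flat_exp P) = flat_exp (flat_exp_dpoly P)"
    by (rule ext) (rule DERIV_imp_deriv[OF DERIV_flat_exp])
  then show ?case using Suc DERIV_flat_exp real_differentiable_def by auto
qed

definition smooth_step :: "real \<Rightarrow> real \<Rightarrow> real \<Rightarrow> real" where
  "smooth_step a b t = flat_exp 1 (t - a) / (flat_exp 1 (t - a) + flat_exp 1 (b - t))"

lemma smooth_step_eq_0: "t \<le> a \<Longrightarrow> smooth_step a b t = 0"
  by (simp add: smooth_step_def flat_exp_def)

lemma smooth_step_eq_1: "a < b \<Longrightarrow> b \<le> t \<Longrightarrow> smooth_step a b t = 1"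
  by (simp add: smooth_step_def flat_exp_def)

lemma Ck_smooth_step:
  assumes "a < b"
  shows "Ck k (smooth_step a b)"
proof -
  have pos: "flat_exp 1 (t - a) + flat_exp 1 (b - t) > 0" for t
    using assms by (cases "t > a"; cases "b > t") (simp_all add: flat_exp_def add_pos_pos)
  have "Ck k (\<lambda>t. flat_exp 1 (t + - a))" "Ck k (\<lambda>t. flat_exp 1 (- 1 * t + b))"
    by (intro Ck_compose[OF Ck_flat_exp] Ck_add Ck_mult Ck_ident Ck_const)+
  then have "Ck k (\<lambda>t. flat_exp 1 (t - a) * (1 / (flat_exp 1 (t - a) + flat_exp 1 (b - t))))"
    using pos by (intro Ck_mult Ck_inverse Ck_add) (simp_all add: order_less_imp_not_eq2)
  then show ?thesis unfolding smooth_step_def[abs_def] by simp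
qed

section \<open>Towers of derivatives\<close>

definition deriv_tower :: "(nat \<Rightarrow> real \<Rightarrow> real) \<Rightarrow> bool" where
  "deriv_tower S \<longleftrightarrow> (\<forall>k x. (S k has_real_derivative S (Suc k) x) (at x))"

lemma deriv_tower_funpow_deriv:
  assumes "\<And>k. Ck k f"
  shows "deriv_tower (\<lambda>k. (deriv ^^ k) f)"
  unfolding deriv_tower_def
proof (intro allI)
  fix k x
  have "Ck 1 ((deriv ^^ k) f)" using Ck_funpow_deriv[of 1 k f] assms by simp
  then show "((deriv ^^ k) f has_real_derivative (deriv ^^ Suc k) f x) (at x)"
    using differentiable_imp_DERIV_deriv by simp
qed

lemma funpow_deriv_const_on_open:
  fixes f :: "real \<Rightarrow> real"
  assumes "open U" "\<And>y. y \<in> U \<Longrightarrow> f y = c" "x \<in> U"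
  shows "(deriv ^^ k) f x = (if k = 0 then c else 0)"
  using assms(3)
proof (induction k arbitrary: x)
  case (Suc k)
  have "((\<lambda>y. if k = 0 then c else 0) has_real_derivative 0) (at x)" by simp
  then have "((deriv ^^ k) f has_real_derivative 0) (at x)"
    by (rule has_field_derivative_transform_within_open[where S=U]) (use assms Suc in auto)
  then show ?case using DERIV_imp_deriv by simp
qed (use assms in simp)

lemma deriv_periodic:
  assumes "\<And>x. f (x + p) = f x"
  shows "deriv f (x + p) = deriv f x"
proof -
  have "(\<lambda>x. f (x + p)) = f" using assms by (rule ext)
  then show ?thesis unfolding deriv_def DERIV_shift by simp
qed

lemma vderiv_eq_tower:
  assumes "\<And>k x. (D k has_vector_derivative D (Suc k) x) (at x)"
  shows "vderiv k (D 0) = D k"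
proof (induction k)
  case (Suc k)
  have "vderiv (Suc k) (D 0) = (\<lambda>x. vector_derivative (D k) (at x))"
    using Suc by (simp add: vderiv_def)
  also have "\<dots> = D (Suc k)"
    by (rule ext, rule vector_derivative_at, rule assms)
  finally show ?case .
qed (simp add: vderiv_def)

lemma smooth_fun_tower:
  assumes "\<And>k x. (D k has_vector_derivative D (Suc k) x) (at x)"
  shows "smooth_fun (D 0)"
  unfolding smooth_fun_def vderiv_eq_tower[of D, OF assms] using assms by blast

lemma deriv_tower_bounded_on:
  assumes "deriv_tower S" "compact K"
  shows "\<exists>b. \<forall>k. \<forall>y\<in>K. \<bar>S k y\<bar> \<le> b k"
proof -
  have "\<exists>c. \<forall>y\<in>K. \<bar>S k y\<bar> \<le> c" for k
  proof -
    have "continuous_on K (S k)"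
      using assms(1) by (auto simp: deriv_tower_def intro!: continuous_at_imp_continuous_on DERIV_isCont)
    then have "bounded (S k ` K)"
      using assms(2) by (intro compact_imp_bounded compact_continuous_image)
    then show ?thesis by (auto simp: bounded_iff)
  qed
  then show ?thesis by metis
qed

section \<open>The operator \<open>(L\<inverse> d/dx + \<i>)\<^sup>M\<close>\<close>

text \<open>\<open>twist L S M k = (L\<inverse> d/dx + \<i>)\<^sup>M (S k)\<close> when \<open>S\<close> is a tower of derivatives.\<close>
fun twist :: "real \<Rightarrow> (nat \<Rightarrow> real \<Rightarrow> real) \<Rightarrow> nat \<Rightarrow> nat \<Rightarrow> real \<Rightarrow> complex" where
  "twist L S 0 k x = of_real (S k x)"
| "twist L S (Suc M) k x = twist L S M (Suc k) x / of_real L + \<i> * twist L S M k x"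

fun twist_bound :: "(nat \<Rightarrow> real) \<Rightarrow> nat \<Rightarrow> nat \<Rightarrow> real" where
  "twist_bound b 0 k = b k"
| "twist_bound b (Suc M) k = twist_bound b M (Suc k) + twist_bound b M k"

lemma twist_has_vector_derivative:
  assumes "deriv_tower S"
  shows "(twist L S M k has_vector_derivative twist L S M (Suc k) x) (at x)"
proof (induction M arbitrary: k x)
  case 0
  have "twist L S 0 k = (\<lambda>x. of_real (S k x))" by (rule ext) simp
  then show ?case
    using assms by (simp add: deriv_tower_def has_vector_derivative_of_real)
next
  case (Suc M)
  have "twist L S (Suc M) k = (\<lambda>x. twist L S M (Suc k) x / of_real L + \<i> * twist L S M k x)"
    by (rule ext) simp
  then show ?case by (auto intro!: derivative_eq_intros Suc.IH)
qed

lemma continuous_on_twist: "deriv_tower S \<Longrightarrow> continuous_on A (twist L S M k)"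
  using twist_has_vector_derivative has_vector_derivative_continuous
  by (meson continuous_at_imp_continuous_on)

lemma scaled_twist_has_vector_derivative:
  "deriv_tower S \<Longrightarrow> ((\<lambda>x. c * twist L S M k x) has_vector_derivative c * twist L S M (Suc k) x) (at x)"
  using twist_has_vector_derivative by (auto intro!: derivative_eq_intros)

lemma vderiv_scaled_twist:
  "deriv_tower S \<Longrightarrow> vderiv k (\<lambda>x. c * twist L S M 0 x) = (\<lambda>x. c * twist L S M k x)"
  using vderiv_eq_tower[of "\<lambda>k x. c * twist L S M k x"] scaled_twist_has_vector_derivative by simp

lemma smooth_fun_scaled_twist: "deriv_tower S \<Longrightarrow> smooth_fun (\<lambda>x. c * twist L S M 0 x)"
  using smooth_fun_tower[of "\<lambda>k x. c * twist L S M k x"] scaled_twist_has_vector_derivative by simp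

lemma norm_twist_le:
  assumes "\<And>k. \<bar>S k x\<bar> \<le> b k" "L \<ge> 1"
  shows "cmod (twist L S M k x) \<le> twist_bound b M k"
proof (induction M arbitrary: k)
  case (Suc M)
  have "cmod (twist L S M (Suc k) x / of_real L) \<le> cmod (twist L S M (Suc k) x)"
    using assms(2) mult_left_mono[OF assms(2) norm_ge_zero[of "twist L S M (Suc k) x"]]
    by (simp add: norm_divide divide_le_eq)
  then have "cmod (twist L S (Suc M) k x) \<le> cmod (twist L S M (Suc k) x) + cmod (twist L S M k x)"
    using norm_triangle_ineq[of "twist L S M (Suc k) x / of_real L" "\<i> * twist L S M k x"]
    by (simp add: norm_mult)
  then show ?case using Suc[of "Suc k"] Suc[of k] by simp
qed (use assms in simp)

lemma twist_eq_0: "(\<And>k. S k x = 0) \<Longrightarrow> twist L S M k x = 0"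
  by (induction M arbitrary: k) auto

lemma twist_plateau:
  "(\<And>k. S k x = (if k = 0 then 1 else 0)) \<Longrightarrow> twist L S M k x = (if k = 0 then \<i> ^ M else 0)"
  by (induction M arbitrary: k) auto

lemma twist_periodic: "(\<And>k x. S k (x + p) = S k x) \<Longrightarrow> twist L S M k (x + p) = twist L S M k x"
  by (induction M arbitrary: k) auto

lemma emod_has_vector_derivative: "(emod l has_vector_derivative \<i> * of_nat l * emod l x) (at x)"
proof -
  have "emod l = (\<lambda>x. exp (\<i> * of_nat l * of_real x))"
    by (rule ext) (simp add: emod_def mult.assoc)
  moreover have "((\<lambda>z. exp (\<i> * of_nat l * z)) has_field_derivative exp (\<i> * of_nat l * of_real x) * (\<i> * of_nat l))
      (at (of_real x))"
    by (auto intro!: derivative_eq_intros)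
  ultimately show ?thesis
    using has_vector_derivative_real_field by (fastforce simp: mult.commute)
qed

lemma emod_periodic: "emod l (y + 2 * pi) = emod l y"
proof -
  have "emod l (y + 2 * pi) = exp (\<i> * (of_nat l * of_real y) + \<i> * (of_nat l * (of_real pi * 2)))"
    by (simp add: emod_def algebra_simps)
  also have "\<dots> = exp (\<i> * (of_nat l * of_real y)) * exp (\<i> * (of_nat l * (of_real pi * 2)))"
    by (rule exp_add)
  finally show ?thesis by (simp add: emod_def)
qed

lemma emod_twist_has_vector_derivative:
  assumes "deriv_tower S" "l \<ge> 1"
  shows "((\<lambda>y. emod l y * twist l S M 0 y) has_vector_derivative
           of_nat l * (emod l x * twist l S (Suc M) 0 x)) (at x)"
proof -
  have "((\<lambda>y. emod l y * twist l S M 0 y) has_vector_derivative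
      emod l x * twist l S M (Suc 0) x + \<i> * of_nat l * emod l x * twist l S M 0 x) (at x)"
    using has_vector_derivative_mult[OF emod_has_vector_derivative twist_has_vector_derivative[OF assms(1)]]
    by simp
  moreover have "emod l x * twist l S M (Suc 0) x + \<i> * of_nat l * emod l x * twist l S M 0 x
      = of_nat l * (emod l x * twist l S (Suc M) 0 x)"
    using assms(2) by (simp add: field_simps)
  ultimately show ?thesis by simp
qed

declare twist.simps(2) [simp del]

lemma step_prefactor_cancel:
  assumes "l \<ge> 1"
  shows "\<i> * of_nat l * exp (- \<i> * complex_of_real (real l * x)) * ((c / of_nat l) * (emod l x * z)) = (\<i> * c) * z"
proof -
  have "exp (- \<i> * complex_of_real (real l * x)) * emod l x = 1"
    by (simp add: emod_def exp_minus[symmetric] flip: exp_add)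
  then show ?thesis using assms by (simp add: field_simps)
qed

lemma funpow_step_twist:
  assumes "\<And>c M. step (\<lambda>y. c * twist L S (Suc (Suc M)) 0 y) = (\<lambda>y. (\<i> * c) * twist L S (Suc M) 0 y)"
    and "j \<le> n"
  shows "(step ^^ j) (twist L S (Suc n) 0) = (\<lambda>y. \<i> ^ j * twist L S (Suc n - j) 0 y)"
  using assms(2)
proof (induction j)
  case (Suc j)
  then have "Suc n - j = Suc (Suc (n - Suc j))" "Suc n - Suc j = Suc (n - Suc j)" by simp_all
  with Suc have "(step ^^ Suc j) (twist L S (Suc n) 0) = step (\<lambda>y. \<i> ^ j * twist L S (Suc (Suc (n - Suc j))) 0 y)"
    by simp
  also have "\<dots> = (\<lambda>y. \<i> ^ Suc j * twist L S (Suc n - Suc j) 0 y)"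
    unfolding assms(1) \<open>Suc n - Suc j = _\<close> by simp
  finally show ?case .
qed (simp add: fun_eq_iff)

section \<open>Iterates on the line\<close>

lemma has_integral_emod_twist:
  assumes "deriv_tower S" "l \<ge> 1" "a \<le> b"
  shows "((\<lambda>y. emod l y * (c * twist l S (Suc M) 0 y)) has_integral
           c / of_nat l * (emod l b * twist l S M 0 b - emod l a * twist l S M 0 a)) {a..b}"
proof -
  define F where "F y = c / of_nat l * (emod l y * twist l S M 0 y)" for y
  have "(F has_vector_derivative c / of_nat l * (of_nat l * (emod l y * twist l S (Suc M) 0 y))) (at y)" for y
    unfolding F_def[abs_def]
    by (rule has_vector_derivative_mult_right[OF emod_twist_has_vector_derivative[OF assms(1,2)]])
  then have dF: "(F has_vector_derivative emod l y * (c * twist l S (Suc M) 0 y)) (at y)" for y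
    using assms(2) by (simp add: ac_simps)
  have "((\<lambda>y. emod l y * (c * twist l S (Suc M) 0 y)) has_integral F b - F a) {a..b}"
    by (intro fundamental_theorem_of_calculus[OF assms(3)] has_vector_derivative_at_within[OF dF])
  then show ?thesis unfolding F_def right_diff_distrib .
qed

lemma has_integral_UNIV_of_vanishing_outside:
  fixes F :: "real \<Rightarrow> real"
  assumes "continuous_on UNIV F" "\<And>x. r \<le> \<bar>x\<bar> \<Longrightarrow> F x = 0"
  shows "(F has_integral integral {-r..r} F) UNIV"
proof -
  have "F integrable_on {-r..r}"
    by (rule integrable_continuous_interval) (rule continuous_on_subset[OF assms(1)], simp)
  then show ?thesis
    by (rule has_integral_on_superset[OF integrable_integral]) (use assms(2) in auto)
qed

lemma sum_le_mult_lower_bound: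
  fixes H h :: "nat \<Rightarrow> real"
  assumes "\<And>j. j \<le> n \<Longrightarrow> H j \<le> h j" "\<And>j. j \<le> n \<Longrightarrow> 0 \<le> h j" "0 < a" "a \<le> N"
  shows "(\<Sum>j\<le>n. H j) \<le> ((\<Sum>j\<le>n. h j) / a) * N"
proof -
  have "(\<Sum>j\<le>n. H j) \<le> (\<Sum>j\<le>n. h j)"
    using assms(1) by (intro sum_mono) simp
  also have "\<dots> = ((\<Sum>j\<le>n. h j) / a) * a"
    using assms(3) by simp
  also have "\<dots> \<le> ((\<Sum>j\<le>n. h j) / a) * N"
    using assms by (intro mult_left_mono divide_nonneg_pos sum_nonneg) auto
  finally show ?thesis .
qed

definition iterate_Hm_bound :: "real \<Rightarrow> (nat \<Rightarrow> real) \<Rightarrow> nat \<Rightarrow> nat \<Rightarrow> real" where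
  "iterate_Hm_bound w b n m = (\<Sum>j\<le>n. sqrt (\<Sum>k\<le>m. w * (twist_bound b (Suc n - j) k)\<^sup>2))"

context
  fixes S :: "nat \<Rightarrow> real \<Rightarrow> real"
  assumes tower: "deriv_tower S"
    and vanish: "\<And>k y. 1/2 \<le> \<bar>y\<bar> \<Longrightarrow> S k y = 0"
begin

lemma twist_eq_0_outside: "1/2 \<le> \<bar>y\<bar> \<Longrightarrow> twist L S M k y = 0"
  using vanish by (intro twist_eq_0)

lemma deriv_tower_bounded: "\<exists>b. \<forall>k y. \<bar>S k y\<bar> \<le> b k"
proof -
  obtain b where b: "\<And>k y. y \<in> {-1/2..1/2} \<Longrightarrow> \<bar>S k y\<bar> \<le> b k"
    using deriv_tower_bounded_on[OF tower compact_Icc] by blast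
  have "\<bar>S k y\<bar> \<le> b k" for k y
  proof (cases "1/2 \<le> \<bar>y\<bar>")
    case True
    then show ?thesis using b[of 0 k] vanish by simp
  next
    case False
    then have "y \<in> {-1/2..1/2}" by auto
    then show ?thesis by (rule b)
  qed
  then show ?thesis by blast
qed

lemma has_integral_emod_twist_halfline:
  assumes l: "l \<ge> 1"
  shows "((\<lambda>y. emod l y * (c * twist l S (Suc M) 0 y)) has_integral
            c / of_nat l * (emod l x * twist l S M 0 x)) {..x}"
    (is "(?g has_integral ?F x) _")
proof (cases "-1 \<le> x")
  case True
  then have "(?g has_integral ?F x) {-1..x}"
    using has_integral_emod_twist[OF tower l True, of c M] by (simp add: twist_eq_0_outside[of "-1"])
  then have "((\<lambda>y. if y \<le> x then ?g y else 0) has_integral ?F x) {-1..x}"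
    by (rule has_integral_cong[THEN iffD1, rotated]) auto
  then have "((\<lambda>y. if y \<le> x then ?g y else 0) has_integral ?F x) {..x}"
    by (rule has_integral_on_superset) (auto simp: twist_eq_0_outside)
  then show ?thesis by (rule has_integral_cong[THEN iffD1, rotated]) auto
next
  case False
  have "(?g has_integral 0) {..x}"
    using False by (intro has_integral_is_0) (simp add: twist_eq_0_outside)
  then show ?thesis using False by (simp add: twist_eq_0_outside[of x])
qed

lemma step_R_twist:
  assumes "l \<ge> 1"
  shows "step_R l (\<lambda>y. c * twist l S (Suc M) 0 y) = (\<lambda>y. (\<i> * c) * twist l S M 0 y)"
  using integral_unique[OF has_integral_emod_twist_halfline[OF assms]] step_prefactor_cancel[OF assms]
  by (simp add: step_R_def inv_dx_R_def fun_eq_iff)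

lemma supp_in_R_twist: "supp_in_R (\<lambda>x. c * twist L S M 0 x)"
proof -
  have "{x. c * twist L S M 0 x \<noteq> 0} \<subseteq> {-1/2..1/2}"
    using twist_eq_0_outside by (force simp: abs_le_iff)
  then have "closure {x. c * twist L S M 0 x \<noteq> 0} \<subseteq> {-1/2..1/2}"
    by (rule closure_minimal) simp
  then show ?thesis unfolding supp_in_R_def by auto
qed

lemma schwartz_R_twist:
  assumes "L \<ge> 1"
  shows "schwartz_R (\<lambda>x. c * twist L S M 0 x)"
  unfolding schwartz_R_def
proof (intro conjI allI)
  show "smooth_fun (\<lambda>x. c * twist L S M 0 x)"
    using smooth_fun_scaled_twist[OF tower] .
  obtain b where b: "\<And>k y. \<bar>S k y\<bar> \<le> b k"
    using deriv_tower_bounded by blast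
  fix a k
  have "norm (complex_of_real (x ^ a) * (c * twist L S M k x)) \<le> cmod c * twist_bound b M k" for x
  proof (cases "1/2 \<le> \<bar>x\<bar>")
    case True
    have "cmod (twist L S M k 0) \<le> twist_bound b M k"
      by (intro norm_twist_le b assms)
    then have "0 \<le> twist_bound b M k"
      using norm_ge_zero order_trans by blast
    then show ?thesis using True by (simp add: twist_eq_0_outside)
  next
    case False
    then have "\<bar>x\<bar> ^ a \<le> 1" "cmod (twist L S M k x) \<le> twist_bound b M k"
      using b assms by (auto intro!: power_le_one norm_twist_le)
    then have "\<bar>x\<bar> ^ a * (cmod c * cmod (twist L S M k x)) \<le> 1 * (cmod c * twist_bound b M k)"
      by (intro mult_mono mult_left_mono) auto
    then show ?thesis by (simp add: norm_mult norm_power)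
  qed
  then show "bounded (range (\<lambda>x. complex_of_real (x ^ a) * vderiv k (\<lambda>x. c * twist L S M 0 x) x))"
    unfolding vderiv_scaled_twist[OF tower] bounded_iff by blast
qed

lemma Hm_R_twist_le:
  assumes b: "\<And>k y. \<bar>S k y\<bar> \<le> b k" and "L \<ge> 1"
  shows "Hm_R m (\<lambda>x. c * twist L S M 0 x) \<le> sqrt (\<Sum>k\<le>m. (cmod c * twist_bound b M k)\<^sup>2)"
  unfolding Hm_R_def vderiv_scaled_twist[OF tower]
proof (intro real_sqrt_le_mono sum_mono)
  fix k
  define F where "F x = (cmod (c * twist L S M k x))\<^sup>2" for x
  have cont: "continuous_on UNIV F"
    unfolding F_def by (intro continuous_intros continuous_on_twist[OF tower])
  have "integral UNIV F = integral {-1/2..1/2} F"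
    using has_integral_UNIV_of_vanishing_outside[OF cont, of "1/2"]
    by (simp add: F_def twist_eq_0_outside integral_unique)
  also have "\<dots> \<le> integral {-1/2..1/2::real} (\<lambda>x. (cmod c * twist_bound b M k)\<^sup>2)"
  proof (intro integral_le integrable_continuous_interval continuous_on_subset[OF cont] continuous_on_const)
    fix x :: real assume "x \<in> {-1/2..1/2}"
    then have "cmod (twist L S M k x) \<le> twist_bound b M k"
      by (intro norm_twist_le b assms(2))
    then show "F x \<le> (cmod c * twist_bound b M k)\<^sup>2"
      by (simp add: F_def norm_mult power_mono mult_left_mono)
  qed auto
  finally show "integral UNIV F \<le> (cmod c * twist_bound b M k)\<^sup>2" by simp
qed

lemma L2_R_twist_ge:
  assumes "\<And>k y. \<bar>y\<bar> \<le> 1/5 \<Longrightarrow> S k y = (if k = 0 then 1 else 0)"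
  shows "sqrt (2/5) \<le> L2_R (twist L S M 0)"
proof -
  define F where "F = (\<lambda>x. (cmod (twist L S M 0 x))\<^sup>2)"
  have cont: "continuous_on UNIV F"
    unfolding F_def by (intro continuous_intros continuous_on_twist[OF tower])
  have "integral {-1/5..1/5::real} (\<lambda>x. 1) = integral {-1/5..1/5} F"
    using assms by (intro integral_cong) (auto simp: F_def twist_plateau norm_power)
  also have "\<dots> \<le> integral {-1/2..1/2} F"
    by (intro integral_subset_le integrable_continuous_interval continuous_on_subset[OF cont])
       (auto simp: F_def)
  also have "\<dots> = integral UNIV F"
    using has_integral_UNIV_of_vanishing_outside[OF cont, of "1/2"]
    by (simp add: F_def twist_eq_0_outside integral_unique)
  finally show ?thesis unfolding L2_R_def F_def[symmetric] by simp
qed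

lemma wave_packet_line:
  assumes plateau: "\<And>k y. \<bar>y\<bar> \<le> 1/5 \<Longrightarrow> S k y = (if k = 0 then 1 else 0)"
    and b: "\<And>k y. \<bar>S k y\<bar> \<le> b k"
  shows "\<exists>C. \<forall>l\<ge>1. \<exists>p. schwartz_R p \<and> (\<exists>x. p x \<noteq> 0) \<and> iter_R_defined l n p \<and>
           (\<forall>j\<in>{1..n}. schwartz_R (iter_R l j p)) \<and>
           (\<forall>m. (\<Sum>j\<le>n. Hm_R m (iter_R l j p)) \<le> C m * L2_R p) \<and>
           (\<forall>j\<le>n. supp_in_R (iter_R l j p))"
proof -
  define p where "p l = twist l S (Suc n) 0" for l :: nat
  have iter: "iter_R l j (p l) = (\<lambda>x. \<i> ^ j * twist l S (Suc (n - j)) 0 x)" if "l \<ge> 1" "j \<le> n" for l j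
    using funpow_step_twist[OF step_R_twist[OF that(1)] that(2)] that(2)
    by (simp add: iter_R_def p_def Suc_diff_le)
  have "iter_R_defined l n (p l)" if "l \<ge> 1" for l
    using has_integral_emod_twist_halfline[OF that]
    by (auto simp: iter_R_defined_def inv_dx_R_defined_def iter[OF that])
  moreover have "schwartz_R (p l)" if "l \<ge> 1" for l
    using schwartz_R_twist[of l 1 "Suc n"] that by (simp add: p_def)
  moreover have "p l 0 \<noteq> 0" for l
    using twist_plateau[of S 0] plateau by (simp add: p_def)
  moreover have "schwartz_R (iter_R l j (p l))" "supp_in_R (iter_R l j (p l))" if "l \<ge> 1" "j \<le> n" for l j
    using schwartz_R_twist supp_in_R_twist that by (simp_all add: iter)
  moreover have "(\<Sum>j\<le>n. Hm_R m (iter_R l j (p l))) \<le> iterate_Hm_bound 1 b n m / sqrt (2/5) * L2_R (p l)"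
    if "l \<ge> 1" for l m
    unfolding iterate_Hm_bound_def
  proof (rule sum_le_mult_lower_bound)
    show "Hm_R m (iter_R l j (p l)) \<le> sqrt (\<Sum>k\<le>m. 1 * (twist_bound b (Suc n - j) k)\<^sup>2)" if "j \<le> n" for j
      using Hm_R_twist_le[OF b, of l m "\<i> ^ j"] \<open>l \<ge> 1\<close> that
      by (simp add: iter Suc_diff_le norm_power del: twist_bound.simps)
    show "sqrt (2/5) \<le> L2_R (p l)"
      unfolding p_def by (rule L2_R_twist_ge[OF plateau])
  qed (auto intro: sum_nonneg)
  ultimately show ?thesis
    by (intro exI[of _ "\<lambda>m. iterate_Hm_bound 1 b n m / sqrt (2/5)"] allI impI exI[of _ "p _"]) auto
qed

end

section \<open>Iterates on the torus\<close>

context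
  fixes S :: "nat \<Rightarrow> real \<Rightarrow> real"
  assumes tower: "deriv_tower S"
    and periodic: "\<And>k x. S k (x + 2 * pi) = S k x"
    and vanish_0: "\<And>k. S k 0 = 0"
begin

lemma emod_twist_at_2pi: "emod l (2 * pi) * twist L S M 0 (2 * pi) = emod l 0 * twist L S M 0 0"
  using emod_periodic[of l 0] twist_periodic[of S "2 * pi" L M 0 0] periodic by simp

lemma twist_at_0: "twist L S M k 0 = 0"
  using vanish_0 by (rule twist_eq_0)

lemma has_integral_emod_twist_period:
  assumes "l \<ge> 1"
  shows "((\<lambda>y. emod l y * (c * twist l S (Suc M) 0 y)) has_integral 0) {0..2 * pi}"
  using has_integral_emod_twist[OF tower assms, of 0 "2 * pi" c M] emod_twist_at_2pi by simp

text \<open>Integration by parts against the antiderivative, which vanishes at \<open>0\<close> and \<open>2\<pi>\<close> and has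
  mean zero.\<close>
lemma has_integral_moment_emod_twist:
  assumes l: "l \<ge> 1"
  shows "((\<lambda>y. of_real y * (emod l y * (c * twist l S (Suc (Suc M)) 0 y))) has_integral 0) {0..2 * pi}"
proof -
  define g where "g y = emod l y * (c * twist l S (Suc (Suc M)) 0 y)" for y
  define F where "F y = c / of_nat l * (emod l y * twist l S (Suc M) 0 y)" for y
  have dF: "(F has_vector_derivative g y) (at y)" for y
    using has_vector_derivative_mult_right[OF emod_twist_has_vector_derivative[OF tower l], of "c / of_nat l"] l
    by (simp add: F_def[abs_def] g_def ac_simps)
  have d: "((\<lambda>y. of_real y * F y) has_vector_derivative of_real y * g y + F y) (at y)" for y
    using has_vector_derivative_mult[OF has_vector_derivative_of_real[OF DERIV_ident] dF[of y]]
    by (simp add: ac_simps)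
  have "((\<lambda>y. of_real y * g y + F y) has_integral of_real (2 * pi) * F (2 * pi) - of_real 0 * F 0) {0..2 * pi}"
    by (intro fundamental_theorem_of_calculus has_vector_derivative_at_within[OF d]) simp
  moreover have "F (2 * pi) = 0"
    using emod_twist_at_2pi[of l l "Suc M"] by (simp add: F_def twist_at_0)
  moreover have "(F has_integral 0) {0..2 * pi}"
    using has_integral_emod_twist_period[OF l, of "c / of_nat l" M] by (simp add: F_def[abs_def] ac_simps)
  ultimately have "((\<lambda>y. (of_real y * g y + F y) - F y) has_integral 0 - 0) {0..2 * pi}"
    by (intro has_integral_diff) auto
  then show ?thesis by (simp add: g_def)
qed

lemma inv_dx_T_defined_twist:
  assumes "l \<ge> 1"
  shows "inv_dx_T_defined (\<lambda>y. emod l y * (c * twist l S (Suc (Suc M)) 0 y))"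
  using has_integral_emod_twist_period[OF assms, of c "Suc M"] has_integral_moment_emod_twist[OF assms, of c M]
  unfolding inv_dx_T_defined_def by (meson has_integral_integrable integral_unique)

lemma step_T_twist:
  assumes l: "l \<ge> 1"
  shows "step_T l (\<lambda>y. c * twist l S (Suc (Suc M)) 0 y) = (\<lambda>y. (\<i> * c) * twist l S (Suc M) 0 y)"
proof
  fix x
  have "int0 (\<lambda>y. emod l y * (c * twist l S (Suc (Suc M)) 0 y)) x
      = c / of_nat l * (emod l x * twist l S (Suc M) 0 x)"
    using has_integral_emod_twist[OF tower l, of 0 x c "Suc M"] has_integral_emod_twist[OF tower l, of x 0 c "Suc M"]
    by (cases "0 \<le> x") (simp_all add: int0_def integral_unique twist_at_0)
  moreover have "integral {0..2 * pi} (\<lambda>y. of_real y * (emod l y * (c * twist l S (Suc (Suc M)) 0 y))) = 0"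
    using has_integral_moment_emod_twist[OF l] by (rule integral_unique)
  ultimately show "step_T l (\<lambda>y. c * twist l S (Suc (Suc M)) 0 y) x = (\<i> * c) * twist l S (Suc M) 0 x"
    using step_prefactor_cancel[OF l] by (simp add: step_T_def inv_dx_T_def)
qed

end

lemma schwartz_T_twist:
  assumes "deriv_tower S" "\<And>k x. S k (x + 2 * pi) = S k x"
  shows "schwartz_T (\<lambda>x. c * twist L S M 0 x)"
  using smooth_fun_scaled_twist[OF assms(1)] twist_periodic[of S, OF assms(2)]
  by (simp add: schwartz_T_def periodic_2pi_def)

lemma Hm_T_twist_le:
  assumes "deriv_tower S" "\<And>k y. y \<in> {0..2 * pi} \<Longrightarrow> \<bar>S k y\<bar> \<le> b k" "L \<ge> 1"
  shows "Hm_T m (\<lambda>x. c * twist L S M 0 x) \<le> sqrt (\<Sum>k\<le>m. 2 * pi * (cmod c * twist_bound b M k)\<^sup>2)"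
  unfolding Hm_T_def vderiv_scaled_twist[OF assms(1)]
proof (intro real_sqrt_le_mono sum_mono)
  fix k
  have "integral {0..2 * pi} (\<lambda>x. (cmod (c * twist L S M k x))\<^sup>2)
      \<le> integral {0..2 * pi} (\<lambda>x::real. (cmod c * twist_bound b M k)\<^sup>2)"
  proof (intro integral_le integrable_continuous_interval continuous_intros continuous_on_twist[OF assms(1)])
    fix x :: real assume "x \<in> {0..2 * pi}"
    then have "cmod (twist L S M k x) \<le> twist_bound b M k"
      using assms(2,3) by (intro norm_twist_le) auto
    then show "(cmod (c * twist L S M k x))\<^sup>2 \<le> (cmod c * twist_bound b M k)\<^sup>2"
      by (simp add: norm_mult power_mono mult_left_mono)
  qed
  then show "integral {0..2 * pi} (\<lambda>x. (cmod (c * twist L S M k x))\<^sup>2) \<le> 2 * pi * (cmod c * twist_bound b M k)\<^sup>2"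
    by simp
qed

lemma L2_T_twist_ge:
  assumes "deriv_tower S" "\<And>k y. \<bar>y - pi/6\<bar> \<le> pi/32 \<Longrightarrow> S k y = (if k = 0 then 1 else 0)"
  shows "sqrt (pi/16) \<le> L2_T (twist L S M 0)"
proof -
  define F where "F = (\<lambda>x. (cmod (twist L S M 0 x))\<^sup>2)"
  have cont: "continuous_on UNIV F"
    unfolding F_def by (intro continuous_intros continuous_on_twist[OF assms(1)])
  have "integral {pi/6 - pi/32..pi/6 + pi/32::real} (\<lambda>x. 1) = integral {pi/6 - pi/32..pi/6 + pi/32} F"
  proof (intro integral_cong)
    fix x :: real assume "x \<in> {pi/6 - pi/32..pi/6 + pi/32}"
    then have "pi/6 - pi/32 \<le> x" "x \<le> pi/6 + pi/32" by auto
    then have "\<bar>x - pi/6\<bar> \<le> pi/32" unfolding abs_le_iff by linarith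
    then show "1 = F x" using assms(2) by (simp add: F_def twist_plateau norm_power)
  qed
  also have "\<dots> \<le> integral {0..2 * pi} F"
    by (intro integral_subset_le integrable_continuous_interval continuous_on_subset[OF cont])
       (auto simp: F_def)
  finally show ?thesis unfolding L2_T_def F_def[symmetric] by simp
qed

lemma cos_ge_imp_near_2pi_multiple:
  fixes w a :: real
  assumes "cos a \<le> cos w" "0 \<le> a" "a \<le> pi"
  shows "\<exists>k::int. \<bar>w - 2 * pi * k\<bar> \<le> a"
proof -
  define k where "k = \<lfloor>(w + pi) / (2 * pi)\<rfloor>"
  define v where "v = w - 2 * pi * k"
  have "of_int k \<le> (w + pi) / (2 * pi)" "(w + pi) / (2 * pi) < of_int k + 1"
    unfolding k_def by linarith+
  then have "\<bar>v\<bar> \<le> pi"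
    unfolding v_def by (simp add: field_simps abs_le_iff)
  have "cos \<bar>v\<bar> = cos w"
    by (simp add: v_def cos_diff)
  then have "\<bar>v\<bar> \<le> a"
    using cos_mono_le_eq[of a "\<bar>v\<bar>"] assms \<open>\<bar>v\<bar> \<le> pi\<close> by simp
  then show ?thesis unfolding v_def by blast
qed

lemma supp_in_T_twist:
  assumes "\<And>k y. cos (y - pi/6) < cos (pi/8) \<Longrightarrow> S k y = 0"
  shows "supp_in_T (\<lambda>x. c * twist L S M 0 x)"
proof -
  have "{x. c * twist L S M 0 x \<noteq> 0} \<subseteq> {y. cos (pi/8) \<le> cos (y - pi/6)}"
  proof
    fix x assume x: "x \<in> {x. c * twist L S M 0 x \<noteq> 0}"
    show "x \<in> {y. cos (pi/8) \<le> cos (y - pi/6)}"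
    proof (rule ccontr)
      assume "x \<notin> {y. cos (pi/8) \<le> cos (y - pi/6)}"
      then have "twist L S M 0 x = 0" using assms by (intro twist_eq_0) simp
      with x show False by simp
    qed
  qed
  then have "closure {x. c * twist L S M 0 x \<noteq> 0} \<subseteq> {y. cos (pi/8) \<le> cos (y - pi/6)}"
    by (rule closure_minimal) (intro closed_Collect_le continuous_intros)
  moreover have "{y. cos (pi/8) \<le> cos (y - pi/6)} \<subseteq> (\<Union>k::int. {2 * pi * k - 1<..<2 * pi * k + 1})"
  proof
    fix y assume "y \<in> {y. cos (pi/8) \<le> cos (y - pi/6)}"
    then obtain k :: int where "\<bar>y - pi/6 - 2 * pi * k\<bar> \<le> pi/8"
      using cos_ge_imp_near_2pi_multiple[of "pi/8" "y - pi/6"] pi_gt_zero by auto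
    moreover have "pi < 16/5"
      using pi_approx(2) by simp
    ultimately have "2 * pi * k - 1 < y" "y < 2 * pi * k + 1"
      unfolding abs_le_iff by linarith+
    then show "y \<in> (\<Union>k::int. {2 * pi * k - 1<..<2 * pi * k + 1})"
      by (intro UN_I[of k]) auto
  qed
  ultimately show ?thesis unfolding supp_in_T_def by blast
qed

lemma wave_packet_torus:
  assumes tower: "deriv_tower S" and periodic: "\<And>k x. S k (x + 2 * pi) = S k x"
    and outside: "\<And>k y. cos (y - pi/6) < cos (pi/8) \<Longrightarrow> S k y = 0"
    and plateau: "\<And>k y. \<bar>y - pi/6\<bar> \<le> pi/32 \<Longrightarrow> S k y = (if k = 0 then 1 else 0)"
    and b: "\<And>k y. y \<in> {0..2 * pi} \<Longrightarrow> \<bar>S k y\<bar> \<le> b k"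
  shows "\<exists>C. \<forall>l\<ge>1. \<exists>p. schwartz_T p \<and> (\<exists>x. p x \<noteq> 0) \<and> iter_T_defined l n p \<and>
           (\<forall>j\<in>{1..n}. schwartz_T (iter_T l j p)) \<and>
           (\<forall>m. (\<Sum>j\<le>n. Hm_T m (iter_T l j p)) \<le> C m * L2_T p) \<and>
           (\<forall>j\<le>n. supp_in_T (iter_T l j p))"
proof -
  have "cos (pi/6) < cos (pi/8)"
    by (subst cos_mono_less_eq) auto
  then have vanish_0: "\<And>k. S k 0 = 0"
    using outside by simp
  define p where "p l = twist l S (Suc n) 0" for l :: nat
  have iter: "iter_T l j (p l) = (\<lambda>x. \<i> ^ j * twist l S (Suc (n - j)) 0 x)" if "l \<ge> 1" "j \<le> n" for l j
    using funpow_step_twist[OF step_T_twist[OF tower periodic vanish_0 that(1)] that(2)] that(2)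
    by (simp add: iter_T_def p_def Suc_diff_le)
  have "inv_dx_T_defined (\<lambda>x. emod l x * iter_T l j (p l) x)" if "l \<ge> 1" "j < n" for l j
  proof -
    have "Suc (n - j) = Suc (Suc (n - Suc j))" using that(2) by simp
    then show ?thesis
      using inv_dx_T_defined_twist[OF tower periodic vanish_0 that(1)] that by (simp add: iter)
  qed
  then have "iter_T_defined l n (p l)" if "l \<ge> 1" for l
    using that by (simp add: iter_T_defined_def)
  moreover have "schwartz_T (p l)" for l
    using schwartz_T_twist[OF tower periodic, of 1 l "Suc n"] by (simp add: p_def)
  moreover have "p l (pi/6) \<noteq> 0" for l
    using twist_plateau[of S "pi/6"] plateau by (simp add: p_def)
  moreover have "schwartz_T (iter_T l j (p l))" "supp_in_T (iter_T l j (p l))" if "l \<ge> 1" "j \<le> n" for l j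
    using schwartz_T_twist[OF tower periodic] supp_in_T_twist[OF outside] that by (simp_all add: iter)
  moreover have "(\<Sum>j\<le>n. Hm_T m (iter_T l j (p l))) \<le> iterate_Hm_bound (2 * pi) b n m / sqrt (pi/16) * L2_T (p l)"
    if "l \<ge> 1" for l m
    unfolding iterate_Hm_bound_def
  proof (rule sum_le_mult_lower_bound)
    show "Hm_T m (iter_T l j (p l)) \<le> sqrt (\<Sum>k\<le>m. 2 * pi * (twist_bound b (Suc n - j) k)\<^sup>2)" if "j \<le> n" for j
      using Hm_T_twist_le[OF tower b, of l m "\<i> ^ j"] \<open>l \<ge> 1\<close> that
      by (simp add: iter Suc_diff_le norm_power del: twist_bound.simps)
    show "sqrt (pi/16) \<le> L2_T (p l)"
      unfolding p_def by (rule L2_T_twist_ge[OF tower plateau])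
  qed (auto intro!: sum_nonneg)
  ultimately show ?thesis
    by (intro exI[of _ "\<lambda>m. iterate_Hm_bound (2 * pi) b n m / sqrt (pi/16)"] allI impI exI[of _ "p _"]) auto
qed

section \<open>The bumps and the theorem\<close>

definition bump_R :: "real \<Rightarrow> real" where
  "bump_R x = smooth_step (9/10) (19/20) (1 - x\<^sup>2)"

lemma Ck_bump_R: "Ck k bump_R"
proof -
  have "Ck k (\<lambda>x. smooth_step (9/10) (19/20) (1 + - 1 * (x * x)))"
    by (intro Ck_compose[OF Ck_smooth_step] Ck_add Ck_mult Ck_const Ck_ident) simp
  then show ?thesis unfolding bump_R_def[abs_def] by (simp add: power2_eq_square)
qed

lemma bump_R_derivs_outside:
  assumes "1/2 \<le> \<bar>y\<bar>"
  shows "(deriv ^^ k) bump_R y = 0"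
proof -
  have "1/4 \<le> y\<^sup>2"
    using power_mono[OF assms, of 2] by (simp add: power_divide)
  then have "(deriv ^^ k) bump_R y = (if k = 0 then 0 else 0)"
    by (intro funpow_deriv_const_on_open[where U = "{x. 1 - x\<^sup>2 < 9/10}"] open_Collect_less continuous_intros)
       (auto simp: bump_R_def smooth_step_eq_0)
  then show ?thesis by simp
qed

lemma bump_R_derivs_plateau:
  assumes "\<bar>y\<bar> \<le> 1/5"
  shows "(deriv ^^ k) bump_R y = (if k = 0 then 1 else 0)"
proof -
  have "y\<^sup>2 \<le> 1/25"
    using power_mono[OF assms, of 2] by (simp add: power_divide)
  then show ?thesis
    by (intro funpow_deriv_const_on_open[where U = "{x. 19/20 < 1 - x\<^sup>2}"] open_Collect_less continuous_intros)
       (auto simp: bump_R_def smooth_step_eq_1)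
qed

lemma cos_pi8_less_cos_pi16: "cos (pi/8) < cos (pi/16)"
  by (subst cos_mono_less_eq) auto

text \<open>Centred at \<open>\<pi>/6\<close>, not \<open>0\<close>: on the torus all derivatives of the bump must vanish at \<open>0\<close>.\<close>
definition bump_T :: "real \<Rightarrow> real" where
  "bump_T x = smooth_step (cos (pi/8)) (cos (pi/16)) (cos (x - pi/6))"

lemma Ck_bump_T: "Ck k bump_T"
proof -
  have "Ck k (\<lambda>x. cos (x + - (pi/6)))"
    using Ck_compose[OF conjunct2[OF Ck_sin_cos] Ck_add[OF Ck_ident Ck_const]] .
  then have "Ck k (\<lambda>x. smooth_step (cos (pi/8)) (cos (pi/16)) (cos (x + - (pi/6))))"
    by (rule Ck_compose[OF Ck_smooth_step[OF cos_pi8_less_cos_pi16]])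
  then show ?thesis unfolding bump_T_def[abs_def] by simp
qed

lemma bump_T_derivs_periodic: "(deriv ^^ k) bump_T (x + 2 * pi) = (deriv ^^ k) bump_T x"
proof (induction k arbitrary: x)
  case 0
  have "cos (x + 2 * pi - pi/6) = cos (x - pi/6)"
    using cos_periodic[of "x - pi/6"] by (simp add: algebra_simps)
  then show ?case by (simp add: bump_T_def)
next
  case (Suc k)
  then show ?case using deriv_periodic[of "(deriv ^^ k) bump_T" "2 * pi" x] by simp
qed

lemma bump_T_derivs_outside:
  assumes "cos (y - pi/6) < cos (pi/8)"
  shows "(deriv ^^ k) bump_T y = 0"
proof -
  have "(deriv ^^ k) bump_T y = (if k = 0 then 0 else 0)"
    using assms
    by (intro funpow_deriv_const_on_open[where U = "{x. cos (x - pi/6) < cos (pi/8)}"] open_Collect_less continuous_intros)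
       (auto simp: bump_T_def smooth_step_eq_0)
  then show ?thesis by simp
qed

lemma bump_T_derivs_plateau:
  assumes "\<bar>y - pi/6\<bar> \<le> pi/32"
  shows "(deriv ^^ k) bump_T y = (if k = 0 then 1 else 0)"
proof -
  have "cos (pi/16) < cos \<bar>y - pi/6\<bar>"
    using assms pi_gt_zero by (subst cos_mono_less_eq) linarith+
  then show ?thesis
    by (intro funpow_deriv_const_on_open[where U = "{x. cos (pi/16) < cos (x - pi/6)}"] open_Collect_less continuous_intros)
       (auto simp: bump_T_def smooth_step_eq_1 cos_pi8_less_cos_pi16)
qed

lemma lemma4p1_line:
  "\<forall>n::nat. n \<ge> 1 \<longrightarrow> (\<exists>C :: nat \<Rightarrow> real. \<forall>l::nat. l \<ge> 1 \<longrightarrow>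
      (\<exists>p. schwartz_R p \<and> (\<exists>x. p x \<noteq> 0) \<and> iter_R_defined l n p \<and>
           (\<forall>j\<in>{1..n}. schwartz_R (iter_R l j p)) \<and>
           (\<forall>m::nat. (\<Sum>j\<le>n. Hm_R m (iter_R l j p)) \<le> C m * L2_R p) \<and>
           ((\<forall>j\<le>n. supp_in_R (iter_R l j p)) \<or> (\<forall>j\<le>n. fsupp_in_R (iter_R l j p)))))"
proof -
  define S where "S k = (deriv ^^ k) bump_R" for k
  have tower: "deriv_tower S"
    unfolding S_def by (rule deriv_tower_funpow_deriv[OF Ck_bump_R])
  have outside: "\<And>k y. 1/2 \<le> \<bar>y\<bar> \<Longrightarrow> S k y = 0"
    unfolding S_def by (rule bump_R_derivs_outside)
  have plateau: "\<And>k y. \<bar>y\<bar> \<le> 1/5 \<Longrightarrow> S k y = (if k = 0 then 1 else 0)"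
    unfolding S_def by (rule bump_R_derivs_plateau)
  obtain b where "\<And>k y. \<bar>S k y\<bar> \<le> b k"
    using deriv_tower_bounded[OF tower outside] by blast
  from wave_packet_line[OF tower outside plateau this] show ?thesis
    by metis
qed

lemma lemma4p1_torus:
  "\<forall>n::nat. n \<ge> 1 \<longrightarrow> (\<exists>C :: nat \<Rightarrow> real. \<forall>l::nat. l \<ge> 1 \<longrightarrow>
      (\<exists>p. schwartz_T p \<and> (\<exists>x. p x \<noteq> 0) \<and> iter_T_defined l n p \<and>
           (\<forall>j\<in>{1..n}. schwartz_T (iter_T l j p)) \<and>
           (\<forall>m::nat. (\<Sum>j\<le>n. Hm_T m (iter_T l j p)) \<le> C m * L2_T p) \<and>
           ((\<forall>j\<le>n. supp_in_T (iter_T l j p)) \<or> (\<forall>j\<le>n. fsupp_in_T (iter_T l j p)))))"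
proof -
  define S where "S k = (deriv ^^ k) bump_T" for k
  have tower: "deriv_tower S"
    unfolding S_def by (rule deriv_tower_funpow_deriv[OF Ck_bump_T])
  have periodic: "\<And>k x. S k (x + 2 * pi) = S k x"
    unfolding S_def by (rule bump_T_derivs_periodic)
  have outside: "\<And>k y. cos (y - pi/6) < cos (pi/8) \<Longrightarrow> S k y = 0"
    unfolding S_def by (rule bump_T_derivs_outside)
  have plateau: "\<And>k y. \<bar>y - pi/6\<bar> \<le> pi/32 \<Longrightarrow> S k y = (if k = 0 then 1 else 0)"
    unfolding S_def by (rule bump_T_derivs_plateau)
  obtain b where "\<And>k y. y \<in> {0..2 * pi} \<Longrightarrow> \<bar>S k y\<bar> \<le> b k"
    using deriv_tower_bounded_on[OF tower compact_Icc] by blast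
  from wave_packet_torus[OF tower periodic outside plateau this] show ?thesis
    by metis
qed

theorem lemma4p1:
  shows
   "(\<forall>n::nat. n \<ge> 1 \<longrightarrow> (\<exists>C :: nat \<Rightarrow> real. \<forall>l::nat. l \<ge> 1 \<longrightarrow>
      (\<exists>p. schwartz_T p \<and> (\<exists>x. p x \<noteq> 0) \<and> iter_T_defined l n p \<and>
           (\<forall>j\<in>{1..n}. schwartz_T (iter_T l j p)) \<and>
           (\<forall>m::nat. (\<Sum>j\<le>n. Hm_T m (iter_T l j p)) \<le> C m * L2_T p) \<and>
           ((\<forall>j\<le>n. supp_in_T (iter_T l j p)) \<or> (\<forall>j\<le>n. fsupp_in_T (iter_T l j p))))))
  \<and>
    (\<forall>n::nat. n \<ge> 1 \<longrightarrow> (\<exists>C :: nat \<Rightarrow> real. \<forall>l::nat. l \<ge> 1 \<longrightarrow>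
      (\<exists>p. schwartz_R p \<and> (\<exists>x. p x \<noteq> 0) \<and> iter_R_defined l n p \<and>
           (\<forall>j\<in>{1..n}. schwartz_R (iter_R l j p)) \<and>
           (\<forall>m::nat. (\<Sum>j\<le>n. Hm_R m (iter_R l j p)) \<le> C m * L2_R p) \<and>
           ((\<forall>j\<le>n. supp_in_R (iter_R l j p)) \<or> (\<forall>j\<le>n. fsupp_in_R (iter_R l j p))))))"
  using lemma4p1_torus lemma4p1_line by (rule conjI)

end
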